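(* For each $n \in \{97, 193, 289\}$, there exists a Shrikhande-graph-design of order $n$. That is, for each such $n$, the edge set of the complete graph $K_n$ can be partitioned into $n(n-1)/96$ subgraphs, each isomorphic to the Shrikhande graph.
   Context: The Shrikhande graph is the Cayley graph on the group $\mathbb{Z}_4 \times \mathbb{Z}_4$ with connection set $\{\pm(1,0), \pm(0,1), \pm(1,1)\}$. It is a 6-regular graph on 16 vertices with 48 edges. *)

theory Defs
  imports Main
begin

text \<open>Shrikhande graph: Cayley graph on Z4 x Z4 (elements represented as pairs of
integers in {0..3}) with connection set {+-(1,0), +-(0,1), +-(1,1)}.\<close>

definition shrikhande_vertices :: "(int \<times> int) set" where
  "shrikhande_vertices = {0..3} \<times> {0..3}"

definition shrikhande_conn :: "(int \<times> int) set" where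
  "shrikhande_conn = {(1,0), (3,0), (0,1), (0,3), (1,1), (3,3)}"

definition shrikhande_adj :: "int \<times> int \<Rightarrow> int \<times> int \<Rightarrow> bool" where
  "shrikhande_adj u v \<longleftrightarrow>
     ((fst v - fst u) mod 4, (snd v - snd u) mod 4) \<in> shrikhande_conn"

definition shrikhande_edges :: "(int \<times> int) set set" where
  "shrikhande_edges = {{u, v} | u v. u \<in> shrikhande_vertices \<and> v \<in> shrikhande_vertices
                                       \<and> shrikhande_adj u v}"

definition complete_edges :: "nat \<Rightarrow> nat set set" where
  "complete_edges n = {e. e \<subseteq> {0..<n} \<and> card e = 2}"

definition shrikhande_copy :: "nat \<Rightarrow> nat set set \<Rightarrow> bool" where
  "shrikhande_copy n H \<longleftrightarrow>
     (\<exists>f. inj_on f shrikhande_vertices \<and> f ` shrikhande_vertices \<subseteq> {0..<n}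
          \<and> H = (\<lambda>e. f ` e) ` shrikhande_edges)"

definition shrikhande_design :: "nat \<Rightarrow> nat set set set \<Rightarrow> bool" where
  "shrikhande_design n D \<longleftrightarrow>
     (\<forall>H\<in>D. shrikhande_copy n H)
     \<and> (\<forall>H1\<in>D. \<forall>H2\<in>D. H1 \<noteq> H2 \<longrightarrow> H1 \<inter> H2 = {})
     \<and> \<Union>D = complete_edges n"

end

theory Submission
  imports Defs "HOL-Library.Numeral_Type" "HOL-Library.Product_Plus"
begin

text \<open>Each design is the development of a difference family. Let \<open>G\<close> be a finite group and
  \<open>B\<^sub>0, \<dots>, B\<^bsub>k-1\<^esub>\<close> injective maps of the Shrikhande graph into \<open>G\<close> such that the
  differences \<open>B\<^sub>i v - B\<^sub>i u\<close>, taken over all blocks \<open>i\<close> and all 96 arcs \<open>(u, v)\<close>, meet every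
  non-zero element of \<open>G\<close> exactly once; then \<open>|G| = 96 k + 1\<close>. The \<open>k |G|\<close> right translates
  \<open>v \<mapsto> B\<^sub>i v + t\<close> are copies of the Shrikhande graph in the complete graph on \<open>G\<close>, and every
  pair \<open>{a, b}\<close> lies in exactly one of them: the difference \<open>b - a\<close> determines the block and
  the arc, and then \<open>a\<close> determines \<open>t\<close>. For \<open>n = 97\<close> and \<open>n = 193\<close> we take \<open>G = Z\<^sub>n\<close>
  with one and two base blocks, for \<open>n = 289\<close> we take \<open>G = Z\<^bsub>17\<^esub> \<times> Z\<^bsub>17\<^esub>\<close> with three; the
  difference property is checked by evaluation.\<close>

lemma shrikhande_adj_sym: "shrikhande_adj u v \<Longrightarrow> shrikhande_adj v u"
proof -
  assume "shrikhande_adj u v"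
  moreover have "(a - b) mod 4 = - ((b - a) mod 4) mod 4" for a b :: int
    by (simp add: mod_minus_eq)
  moreover have "(- x mod 4, - y mod 4) \<in> shrikhande_conn" if "(x, y) \<in> shrikhande_conn" for x y
    using that unfolding shrikhande_conn_def by auto
  ultimately show ?thesis
    unfolding shrikhande_adj_def by metis
qed

lemma shrikhande_adj_irrefl: "\<not> shrikhande_adj u u"
  by (simp add: shrikhande_adj_def shrikhande_conn_def)

definition shrikhande_arcs :: "((int \<times> int) \<times> (int \<times> int)) set" where
  "shrikhande_arcs =
     {(u, v). u \<in> shrikhande_vertices \<and> v \<in> shrikhande_vertices \<and> shrikhande_adj u v}"

lemma shrikhande_arcs_swap: "(u, v) \<in> shrikhande_arcs \<Longrightarrow> (v, u) \<in> shrikhande_arcs"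
  unfolding shrikhande_arcs_def by (auto intro: shrikhande_adj_sym)

lemma shrikhande_edges_eq: "shrikhande_edges = (\<lambda>(u, v). {u, v}) ` shrikhande_arcs"
  unfolding shrikhande_edges_def shrikhande_arcs_def by auto

definition shrikhande_vertex_list :: "(int \<times> int) list" where
  "shrikhande_vertex_list = List.product [0, 1, 2, 3] [0, 1, 2, 3]"

definition shrikhande_arc_list :: "((int \<times> int) \<times> (int \<times> int)) list" where
  "shrikhande_arc_list = filter (\<lambda>(u, v). shrikhande_adj u v)
     (List.product shrikhande_vertex_list shrikhande_vertex_list)"

lemma set_shrikhande_vertex_list: "set shrikhande_vertex_list = shrikhande_vertices"
proof -
  have "{0..3::int} = {0, 1, 2, 3}" by auto
  then show ?thesis unfolding shrikhande_vertex_list_def shrikhande_vertices_def by simp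
qed

lemma set_shrikhande_arc_list: "set shrikhande_arc_list = shrikhande_arcs"
  unfolding shrikhande_arc_list_def shrikhande_arcs_def by (auto simp: set_shrikhande_vertex_list)

lemma distinct_shrikhande_arc_list: "distinct shrikhande_arc_list"
  unfolding shrikhande_arc_list_def
  by (intro distinct_filter distinct_product) (simp_all add: shrikhande_vertex_list_def)

lemma card_shrikhande_arcs: "card shrikhande_arcs = 96"
proof -
  have "length shrikhande_arc_list = 96"
    unfolding shrikhande_arc_list_def shrikhande_vertex_list_def by code_simp
  then show ?thesis
    using distinct_card[OF distinct_shrikhande_arc_list] by (simp add: set_shrikhande_arc_list)
qed

definition shrikhande_difference_family :: "nat \<Rightarrow> (nat \<Rightarrow> int \<times> int \<Rightarrow> 'g::group_add) \<Rightarrow> bool"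
  where
  "shrikhande_difference_family k B \<longleftrightarrow>
     (\<forall>i<k. inj_on (B i) shrikhande_vertices) \<and>
     bij_betw (\<lambda>(i, u, v). B i v - B i u) ({..<k} \<times> shrikhande_arcs) (UNIV - {0})"

lemma diff_translate_right [simp]:
  fixes a b c :: "'a::group_add"
  shows "(a + c) - (b + c) = a - b"
  by (simp only: diff_conv_add_uminus minus_add add.assoc add_minus_cancel)

context
  fixes k :: nat and B :: "nat \<Rightarrow> int \<times> int \<Rightarrow> 'g::{group_add, finite}"
  assumes family: "shrikhande_difference_family k B"
begin

lemma inj_on_block: "i < k \<Longrightarrow> inj_on (B i) shrikhande_vertices"
  using family unfolding shrikhande_difference_family_def by blast

lemma inj_on_arc_difference: "inj_on (\<lambda>(i, u, v). B i v - B i u) ({..<k} \<times> shrikhande_arcs)"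
  using family unfolding shrikhande_difference_family_def bij_betw_def by blast

lemma arc_difference_image:
  "(\<lambda>(i, u, v). B i v - B i u) ` ({..<k} \<times> shrikhande_arcs) = UNIV - {0}"
  using family unfolding shrikhande_difference_family_def bij_betw_def by blast

lemma card_group: "CARD('g) = 96 * k + 1"
proof -
  have "card ({..<k} \<times> shrikhande_arcs) = card (UNIV - {0::'g})"
    using family bij_betw_same_card unfolding shrikhande_difference_family_def by blast
  then have "96 * k = CARD('g) - 1"
    by (simp add: card_cartesian_product card_shrikhande_arcs card_Diff_singleton)
  then show ?thesis
    using finite_UNIV_card_ge_0[where 'a='g] by simp
qed

lemma translated_arc_unique:
  assumes "(i, u, v) \<in> {..<k} \<times> shrikhande_arcs" "(j, u', v') \<in> {..<k} \<times> shrikhande_arcs"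
    and "B i u + t = B j u' + s" "B i v + t = B j v' + s"
  shows "(i, u, v) = (j, u', v') \<and> t = s"
proof -
  have "B i v - B i u = (B i v + t) - (B i u + t)" by simp
  also have "\<dots> = (B j v' + s) - (B j u' + s)" using assms(3,4) by simp
  also have "\<dots> = B j v' - B j u'" by simp
  finally have "B i v - B i u = B j v' - B j u'" .
  then have arc: "(i, u, v) = (j, u', v')"
    using inj_onD[OF inj_on_arc_difference _ assms(1,2)] by simp
  then show ?thesis using assms(3) by simp
qed

lemma translated_arc_exists:
  assumes "a \<noteq> b"
  obtains i u v t where "(i, u, v) \<in> {..<k} \<times> shrikhande_arcs" "B i u + t = a" "B i v + t = b"
proof -
  have "b - a \<in> (\<lambda>(i, u, v). B i v - B i u) ` ({..<k} \<times> shrikhande_arcs)"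
    using assms by (simp add: arc_difference_image)
  then obtain i u v where arc: "(i, u, v) \<in> {..<k} \<times> shrikhande_arcs" "B i v - B i u = b - a"
    by auto
  show ?thesis
  proof (rule that[OF arc(1)])
    show "B i u + (- B i u + a) = a" by simp
    show "B i v + (- B i u + a) = b" by (simp add: add.assoc[symmetric] arc(2))
  qed
qed

context
  fixes enc :: "'g \<Rightarrow> nat"
  assumes enc: "bij_betw enc UNIV {0..<CARD('g)}"
begin

definition development :: "nat \<Rightarrow> 'g \<Rightarrow> nat set set" where
  "development i t = (\<lambda>e. (\<lambda>v. enc (B i v + t)) ` e) ` shrikhande_edges"

lemma enc_eq_iff [simp]: "enc x = enc y \<longleftrightarrow> x = y"
  using enc unfolding bij_betw_def by (simp add: inj_eq)

lemma development_eq: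
  "development i t = (\<lambda>(u, v). {enc (B i u + t), enc (B i v + t)}) ` shrikhande_arcs"
  unfolding development_def shrikhande_edges_eq image_image by (intro image_cong) auto

lemma mem_development:
  "e \<in> development i t \<longleftrightarrow> (\<exists>(u, v) \<in> shrikhande_arcs. e = {enc (B i u + t), enc (B i v + t)})"
  unfolding development_eq by auto

lemma development_shrikhande_copy:
  assumes "i < k"
  shows "shrikhande_copy CARD('g) (development i t)"
  unfolding shrikhande_copy_def
proof (intro exI conjI)
  show "inj_on (\<lambda>v. enc (B i v + t)) shrikhande_vertices"
    using inj_on_block[OF assms] by (auto simp: inj_on_def)
  show "(\<lambda>v. enc (B i v + t)) ` shrikhande_vertices \<subseteq> {0..<CARD('g)}"
    using enc by (auto simp: bij_betw_def)
qed (simp add: development_def)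

lemma development_subset_complete_edges:
  assumes "i < k"
  shows "development i t \<subseteq> complete_edges CARD('g)"
proof
  fix e assume "e \<in> development i t"
  then obtain u v where uv: "(u, v) \<in> shrikhande_arcs" "e = {enc (B i u + t), enc (B i v + t)}"
    unfolding mem_development by blast
  have "u \<noteq> v" "u \<in> shrikhande_vertices" "v \<in> shrikhande_vertices"
    using uv(1) shrikhande_adj_irrefl[of u] unfolding shrikhande_arcs_def by auto
  then have "B i u \<noteq> B i v"
    using inj_on_block[OF assms] by (auto dest: inj_onD)
  then show "e \<in> complete_edges CARD('g)"
    using uv(2) enc unfolding complete_edges_def by (auto simp: bij_betw_def)
qed

lemma complete_edges_covered:
  assumes "e \<in> complete_edges CARD('g)"
  shows "\<exists>i<k. \<exists>t. e \<in> development i t"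
proof -
  obtain x y where e: "e = {x, y}" "x \<noteq> y" "x < CARD('g)" "y < CARD('g)"
    using assms unfolding complete_edges_def by (auto simp: card_2_iff)
  have inv_enc: "enc (inv enc x) = x" "enc (inv enc y) = y"
    using e(3,4) enc by (auto simp: bij_betw_def f_inv_into_f)
  then have "inv enc x \<noteq> inv enc y"
    using e(2) by metis
  then obtain i u v t where arc: "(i, u, v) \<in> {..<k} \<times> shrikhande_arcs"
    "B i u + t = inv enc x" "B i v + t = inv enc y"
    by (rule translated_arc_exists)
  then have "e = {enc (B i u + t), enc (B i v + t)}"
    using e(1) inv_enc by simp
  then have "e \<in> development i t"
    using arc(1) unfolding mem_development by blast
  then show ?thesis using arc(1) by blast
qed

lemma development_unique:
  assumes "i < k" "j < k" "e \<in> development i t" "e \<in> development j s"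
  shows "i = j \<and> t = s"
proof -
  obtain u v where uv: "(u, v) \<in> shrikhande_arcs" "e = {enc (B i u + t), enc (B i v + t)}"
    using assms(3) unfolding mem_development by blast
  obtain u' v' where uv': "(u', v') \<in> shrikhande_arcs" "e = {enc (B j u' + s), enc (B j v' + s)}"
    using assms(4) unfolding mem_development by blast
  consider "B i u + t = B j u' + s" "B i v + t = B j v' + s"
    | "B i u + t = B j v' + s" "B i v + t = B j u' + s"
    using uv(2) uv'(2) by (auto simp: doubleton_eq_iff)
  then show ?thesis
  proof cases
    case 1
    then show ?thesis
      using translated_arc_unique[of i u v j u' v' t s] uv(1) uv'(1) assms(1,2) by simp
  next
    case 2
    then show ?thesis
      using translated_arc_unique[of i u v j v' u' t s] uv(1) shrikhande_arcs_swap[OF uv'(1)]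
        assms(1,2) by simp
  qed
qed

lemma shrikhande_design_developments:
  "shrikhande_design CARD('g) (case_prod development ` ({..<k} \<times> UNIV))"
    (is "shrikhande_design _ ?D")
  unfolding shrikhande_design_def
proof (intro conjI)
  show "\<forall>H\<in>?D. shrikhande_copy CARD('g) H"
    using development_shrikhande_copy by auto
  show "\<forall>H1\<in>?D. \<forall>H2\<in>?D. H1 \<noteq> H2 \<longrightarrow> H1 \<inter> H2 = {}"
    using development_unique by blast
  show "\<Union> ?D = complete_edges CARD('g)"
  proof
    show "\<Union> ?D \<subseteq> complete_edges CARD('g)"
      using development_subset_complete_edges by auto
    show "complete_edges CARD('g) \<subseteq> \<Union> ?D"
      using complete_edges_covered by blast
  qed
qed

lemma inj_on_developments: "inj_on (case_prod development) ({..<k} \<times> UNIV)"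
proof (rule inj_onI, clarsimp)
  fix i t j s assume "i < k" "j < k" "development i t = development j s"
  moreover have "development i t \<noteq> {}"
    using card_shrikhande_arcs by (auto simp: development_eq)
  ultimately show "i = j \<and> t = s" using development_unique by blast
qed

end

end

lemma shrikhande_design_from_difference_family:
  fixes B :: "nat \<Rightarrow> int \<times> int \<Rightarrow> 'g::{group_add, finite}"
  assumes "shrikhande_difference_family k B"
  shows "\<exists>D. shrikhande_design CARD('g) D \<and> finite D \<and> card D = CARD('g) * (CARD('g) - 1) div 96"
proof -
  obtain enc :: "'g \<Rightarrow> nat" where enc: "bij_betw enc UNIV {0..<CARD('g)}"
    using ex_bij_betw_finite_nat[of "UNIV :: 'g set"] by auto
  let ?D = "case_prod (development B enc) ` ({..<k} \<times> UNIV)"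
  have "card ?D = k * CARD('g)"
    using card_image[OF inj_on_developments[OF assms enc]] by (simp add: card_cartesian_product)
  also have "\<dots> = CARD('g) * (CARD('g) - 1) div 96"
    using card_group[OF assms] by simp
  finally have "card ?D = CARD('g) * (CARD('g) - 1) div 96" .
  moreover have "finite ?D" by simp
  ultimately show ?thesis
    using shrikhande_design_developments[OF assms enc] by blast
qed

lemma bij_betw_if_sort_map_eq:
  assumes "distinct xs" "sort (map f xs) = ys" "distinct ys"
  shows "bij_betw f (set xs) (set ys)"
proof -
  have "distinct (map f xs)" "set (map f xs) = set ys"
    using assms(2,3) by (metis distinct_sort set_sort)+
  then show ?thesis
    using assms(1) by (simp add: bij_betw_def distinct_map)
qed

lemma bij_betw_nonzero:
  fixes f :: "'a::zero \<Rightarrow> int"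
  assumes "bij_betw f UNIV {0..<N}" "f 0 = 0"
  shows "bij_betw f (UNIV - {0}) {1..N - 1}"
proof -
  have "0 \<in> {0..<N}"
    using bij_betw_apply[OF assms(1) UNIV_I, of 0] assms(2) by simp
  then have "bij_betw f (UNIV - {0}) ({0..<N} - {0})"
    using bij_betw_DiffI[OF assms(1), of "{0}" "{0}"] assms(2) by blast
  moreover have "{0..<N} - {0} = {1..N - 1}" by auto
  ultimately show ?thesis by simp
qed

text \<open>The encoding \<open>enc\<close> is integer-valued because \<open>code_simp\<close> compares and sorts
  integer numerals much faster than natural ones.\<close>

lemma shrikhande_difference_family_by_enumeration:
  fixes B :: "nat \<Rightarrow> int \<times> int \<Rightarrow> 'g::group_add" and enc :: "'g \<Rightarrow> int"
  assumes enc: "bij_betw enc UNIV {0..<N}" "enc 0 = 0"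
    and blocks: "\<forall>i<k. distinct (map (\<lambda>v. enc (B i v)) shrikhande_vertex_list)"
    and differences: "sort (map (\<lambda>(i, u, v). enc (B i v - B i u))
      (List.product [0..<k] shrikhande_arc_list)) = [1..N - 1]"
  shows "shrikhande_difference_family k B"
  unfolding shrikhande_difference_family_def
proof (intro conjI allI impI)
  fix i assume "i < k"
  then have "inj_on (enc \<circ> B i) shrikhande_vertices"
    using blocks by (simp add: distinct_map set_shrikhande_vertex_list comp_def)
  then show "inj_on (B i) shrikhande_vertices"
    by (rule inj_on_imageI2)
next
  let ?\<delta> = "\<lambda>(i, u, v). B i v - B i u"
  have "enc \<circ> ?\<delta> = (\<lambda>(i, u, v). enc (B i v - B i u))"
    by (auto simp: fun_eq_iff)
  moreover have "distinct (List.product [0..<k] shrikhande_arc_list)"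
    by (simp add: distinct_product distinct_shrikhande_arc_list)
  ultimately have enc_\<delta>: "bij_betw (enc \<circ> ?\<delta>) ({..<k} \<times> shrikhande_arcs) {1..N - 1}"
    using bij_betw_if_sort_map_eq[OF _ differences distinct_upto]
    by (simp add: set_shrikhande_arc_list lessThan_atLeast0)
  have "?\<delta> x \<noteq> 0" if "x \<in> {..<k} \<times> shrikhande_arcs" for x
  proof
    assume "?\<delta> x = 0"
    then have "(enc \<circ> ?\<delta>) x = 0" using enc(2) by simp
    moreover have "(enc \<circ> ?\<delta>) x \<in> {1..N - 1}"
      using bij_betw_apply[OF enc_\<delta> that] .
    ultimately show False by simp
  qed
  then have "?\<delta> ` ({..<k} \<times> shrikhande_arcs) \<subseteq> UNIV - {0}"
    by auto
  from bij_betw_comp_iff2[OF bij_betw_nonzero[OF enc] this] enc_\<delta>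
  show "bij_betw ?\<delta> ({..<k} \<times> shrikhande_arcs) (UNIV - {0})"
    by (rule iffD2)
qed

text \<open>Row \<open>i\<close> of a table lists the images of the vertices \<open>(0, 0), (0, 1), \<dots>, (3, 3)\<close>
  under the \<open>i\<close>-th base block.\<close>

definition table_block :: "'c list list \<Rightarrow> nat \<Rightarrow> int \<times> int \<Rightarrow> 'c" where
  "table_block T i v = T ! i ! nat (4 * fst v + snd v)"

lemma bij_betw_Rep_bit1:
  "bij_betw Rep_bit1 (UNIV :: 'a::finite bit1 set) {0..<int CARD('a bit1)}"
  using type_definition.Rep_range[OF type_definition_bit1]
  by (simp add: bij_betw_def inj_on_def Rep_bit1_inject)

lemma Rep_bit1_of_int: "Rep_bit1 (of_int a :: 'a::finite bit1) = a mod int CARD('a bit1)"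
  by (simp only: bit1.of_int_eq bit1.Rep_Abs_mod)

lemma bij_betw_digits:
  fixes m n :: int
  assumes "0 \<le> n"
  shows "bij_betw (\<lambda>(a, b). n * a + b) ({0..<m} \<times> {0..<n}) {0..<m * n}"
proof (rule bij_betwI')
  have digits: "(n * a + b) div n = a" "(n * a + b) mod n = b" if "0 \<le> b" "b < n" for a b
    using that by (simp_all add: add.commute[of "n * a"] mult.commute[of n])
  fix p q assume "p \<in> {0..<m} \<times> {0..<n}" "q \<in> {0..<m} \<times> {0..<n}"
  then obtain a b a' b' where pq: "p = (a, b)" "q = (a', b')"
    and bounds: "0 \<le> a" "a < m" "0 \<le> b" "b < n" "0 \<le> b'" "b' < n"
    by auto
  show "((\<lambda>(a, b). n * a + b) p = (\<lambda>(a, b). n * a + b) q) = (p = q)"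
  proof
    assume "(\<lambda>(a, b). n * a + b) p = (\<lambda>(a, b). n * a + b) q"
    then have "n * a + b = n * a' + b'" using pq by simp
    then have "(n * a + b) div n = (n * a' + b') div n" "(n * a + b) mod n = (n * a' + b') mod n"
      by simp_all
    then show "p = q" using pq digits bounds by simp
  qed simp
  have "n * a + b < n * a + n" using bounds(4) by simp
  also have "\<dots> = (a + 1) * n" by (simp add: algebra_simps)
  also have "\<dots> \<le> m * n" using bounds(2) assms by (intro mult_right_mono) simp_all
  finally show "(\<lambda>(a, b). n * a + b) p \<in> {0..<m * n}"
    using pq(1) bounds(1,3) assms by simp
next
  fix z assume z: "z \<in> {0..<m * n}"
  then have "0 < n" using assms by (cases "n = 0") auto
  have "n * (z div n) \<le> z"
    using \<open>0 < n\<close> mult_div_mod_eq[of n z] pos_mod_sign[of n z] by linarith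
  then have "n * (z div n) < n * m"
    using z by (simp add: mult.commute)
  then have "z div n < m"
    using assms by (rule mult_left_less_imp_less)
  then have "(z div n, z mod n) \<in> {0..<m} \<times> {0..<n}" "z = n * (z div n) + z mod n"
    using \<open>0 < n\<close> z by (simp_all add: pos_imp_zdiv_nonneg_iff)
  then show "\<exists>p\<in>{0..<m} \<times> {0..<n}. z = (\<lambda>(a, b). n * a + b) p"
    by (intro bexI[of _ "(z div n, z mod n)"]) simp_all
qed

lemma bij_betw_mixed_radix:
  fixes f :: "'a \<Rightarrow> int" and g :: "'b \<Rightarrow> int"
  assumes "bij_betw f A {0..<m}" "bij_betw g B {0..<n}" "0 \<le> n"
  shows "bij_betw (\<lambda>(x, y). n * f x + g y) (A \<times> B) {0..<m * n}"
proof -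
  have "bij_betw ((\<lambda>(a, b). n * a + b) \<circ> map_prod f g) (A \<times> B) {0..<m * n}"
    using bij_betw_map_prod[OF assms(1,2)] bij_betw_digits[OF assms(3)] by (rule bij_betw_trans)
  moreover have "(\<lambda>(a, b). n * a + b) \<circ> map_prod f g = (\<lambda>(x, y). n * f x + g y)"
    by (auto simp: fun_eq_iff)
  ultimately show ?thesis
    by simp
qed

lemma shrikhande_difference_family_cyclic:
  fixes T :: "int list list"
  assumes "int CARD('a::finite bit1) = N"
    and "\<forall>i<k. distinct (map (\<lambda>v. table_block T i v mod N) shrikhande_vertex_list)"
    and "sort (map (\<lambda>(i, u, v). (table_block T i v - table_block T i u) mod N)
      (List.product [0..<k] shrikhande_arc_list)) = [1..N - 1]"
  shows "shrikhande_difference_family k (\<lambda>i v. of_int (table_block T i v) :: 'a bit1)"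
  using assms bij_betw_Rep_bit1[where 'a='a]
  by (intro shrikhande_difference_family_by_enumeration[where enc = Rep_bit1])
     (simp_all add: Rep_bit1_of_int bit1.Rep_0 flip: of_int_diff)

lemma shrikhande_difference_family_bicyclic:
  fixes T :: "(int \<times> int) list list"
  assumes "int CARD('a::finite bit1) = N"
    and "\<forall>i<k. distinct (map (\<lambda>v. case table_block T i v of
      (a, b) \<Rightarrow> N * (a mod N) + b mod N) shrikhande_vertex_list)"
    and "sort (map (\<lambda>(i, u, v). case table_block T i v - table_block T i u of
      (a, b) \<Rightarrow> N * (a mod N) + b mod N)
      (List.product [0..<k] shrikhande_arc_list)) = [1..N * N - 1]"
  shows "shrikhande_difference_family k
    (\<lambda>i v. map_prod of_int of_int (table_block T i v) :: 'a bit1 \<times> 'a bit1)"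
proof -
  let ?enc = "\<lambda>(x :: 'a bit1, y :: 'a bit1). N * Rep_bit1 x + Rep_bit1 y"
  have "bij_betw ?enc UNIV {0..<N * N}"
    using bij_betw_mixed_radix[OF bij_betw_Rep_bit1[where 'a='a] bij_betw_Rep_bit1[where 'a='a]
        of_nat_0_le_iff]
    unfolding assms(1) UNIV_Times_UNIV .
  moreover have "map_prod of_int of_int z - map_prod of_int of_int w =
      (map_prod of_int of_int (z - w) :: 'a bit1 \<times> 'a bit1)" for z w :: "int \<times> int"
    by (cases z, cases w) simp
  moreover have "?enc (map_prod of_int of_int z) = (case z of (a, b) \<Rightarrow> N * (a mod N) + b mod N)"
    for z :: "int \<times> int"
    using assms(1) by (cases z) (simp add: Rep_bit1_of_int)
  ultimately show ?thesis
    using assms(2,3)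
    by (intro shrikhande_difference_family_by_enumeration[where enc = ?enc])
       (simp_all add: bit1.Rep_0 zero_prod_def)
qed

definition base_blocks_97 :: "int list list" where
  "base_blocks_97 =
    [[0, 62, 20, 43, 96, 50, 34, 37, 56, 19, 21, 26, 4, 83, 92, 36]]"

definition base_blocks_193 :: "int list list" where
  "base_blocks_193 =
    [[0, 112, 143, 133, 130, 171, 7, 177, 4, 145, 46, 9, 82, 21, 27, 144],
     [0, 90, 50, 54, 70, 97, 133, 82, 189, 62, 147, 171, 42, 190, 134, 33]]"

definition base_blocks_17x17 :: "(int \<times> int) list list" where
  "base_blocks_17x17 =
    [[(0, 0), (14, 8), (10, 9), (10, 2), (13, 2), (7, 2), (1, 10), (16, 10),
      (9, 1), (8, 7), (15, 7), (0, 14), (0, 13), (4, 4), (5, 6), (7, 7)],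
     [(0, 0), (6, 6), (8, 16), (11, 3), (12, 2), (4, 12), (2, 14), (0, 6),
      (2, 10), (7, 11), (7, 8), (15, 14), (2, 2), (3, 0), (7, 6), (16, 9)],
     [(0, 0), (11, 13), (12, 5), (8, 15), (10, 14), (1, 0), (9, 8), (7, 12),
      (15, 16), (7, 7), (7, 13), (1, 14), (8, 2), (13, 2), (14, 8), (13, 7)]]"

lemma shrikhande_difference_family_97:
  "shrikhande_difference_family 1 (\<lambda>i v. of_int (table_block base_blocks_97 i v) :: 97)"
  by (rule shrikhande_difference_family_cyclic[where N = 97]) (simp, code_simp, code_simp)

lemma shrikhande_difference_family_193:
  "shrikhande_difference_family 2 (\<lambda>i v. of_int (table_block base_blocks_193 i v) :: 193)"
  by (rule shrikhande_difference_family_cyclic[where N = 193]) (simp, code_simp, code_simp)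

lemma shrikhande_difference_family_17x17:
  "shrikhande_difference_family 3
    (\<lambda>i v. map_prod of_int of_int (table_block base_blocks_17x17 i v) :: 17 \<times> 17)"
  by (rule shrikhande_difference_family_bicyclic[where N = 17]) (simp, code_simp, code_simp)

theorem lemma2p3:
  assumes "n \<in> {97, 193, 289 :: nat}"
  shows "\<exists>D. shrikhande_design n D \<and> finite D \<and> card D = n * (n - 1) div 96"
proof -
  consider "n = CARD(97)" | "n = CARD(193)" | "n = CARD(17 \<times> 17)"
    using assms by auto
  then show ?thesis
  proof cases
    case 1
    then show ?thesis
      using shrikhande_design_from_difference_family[OF shrikhande_difference_family_97] by simp
  next
    case 2
    then show ?thesis
      using shrikhande_design_from_difference_family[OF shrikhande_difference_family_193] by simp
  next
    case 3
    then show ?thesis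
      using shrikhande_design_from_difference_family[OF shrikhande_difference_family_17x17] by simp
  qed
qed

end
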